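(* The statement $\tilde S(1)$ holds.
   Context: Parallelograms in $\mathbb{R}$ are compact intervals $\{b+x:|x|\le l\}$, $l>0$, with width $l$; $CR$ is the dilation of $R$ by factor $C$ about its centre. A finite family $\mathcal R$ is $B$-overlapping ($B:[1,\infty)\to[1,\infty)$ increasing) if $\sum_{R\in\mathcal R}1_{\mu R}\le B(\mu)$ for all $\mu\ge1$; a family depending on $\delta$ is boundedly overlapping if this holds with $B$ independent of $\delta$. Decoupling: for $S\subseteq\mathbb{R}^m$, a finite family $\mathcal R$ of parallelograms and $p,q\in[2,\infty]$, $\mathrm{Dec}(S,\mathcal R,p,q)$ is the smallest constant with $\|\sum_R f_R\|_{L^p(\mathbb{R}^m)}\le \mathrm{Dec}\,(\#\mathcal R)^{\frac12-\frac1q}\big\|\|f_R\|_{L^p}\big\|_{\ell^q(R\in\mathcal R)}$ for all smooth $f_R$ Fourier supported in $R\cap S$. $S$ can be $\ell^q(L^p)$ decoupled into $\mathcal R$ at cost $K$ if $S\subseteq\bigcup\mathcal R$ and $\mathrm{Dec}\le K$. $\mathcal P_{n,d}$: real polynomials in $n$ variables of degree at most $d$ with $\max_{[-1,1]^n}|\phi|\le1$. $\tilde S(n)$ means: for every $d\ge1$ there is $c_{n,d}>0$ such that for every $\phi\in\mathcal P_{n,d}$, every $0<\delta<c_{n,d}$, every $\varepsilon\in(0,1]$ and every parallelogram $R\subseteq[-1,1]^n$ of width at least $\delta$, there is a covering $\mathcal S_\delta$ of $\{x\in R:|\phi(x)|\le\delta\}$ by parallelograms contained in $2R$ such that (1)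 each member has width at least $\delta$ and $\mathcal S_\delta$ is boundedly overlapping; (2) $|\phi(x)|\le C\delta$ for every $x$ in every member; (3) for every $2\le p\le\frac{2(n+1)}{n-1}$ (for $n=1$: every $p\in[2,\infty]$), $\{x\in R:|\phi(x)|\le\delta\}$ can be $\ell^p(L^p)$ decoupled into $\mathcal S_\delta$ at cost at most $C\delta^{-\varepsilon}$. Here $C$ and the overlap function depend only on $n,d,\varepsilon,p$. *)

theory Defs
  imports "HOL-Probability.Probability" "HOL-Computational_Algebra.Polynomial"
begin

text \<open>Parallelograms in the real line: a pair (b, l) with l > 0 stands for the
 compact interval with centre b and width l.\<close>

definition par :: "real \<times> real \<Rightarrow> real set" where
  "par R = {x. \<bar>x - fst R\<bar> \<le> snd R}"

definition width :: "real \<times> real \<Rightarrow> real" where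
  "width R = snd R"

definition is_par :: "real \<times> real \<Rightarrow> bool" where
  "is_par R \<longleftrightarrow> snd R > 0"

definition dil :: "real \<Rightarrow> real \<times> real \<Rightarrow> real \<times> real" where
  "dil C R = (fst R, C * snd R)"

definition overlap_fun :: "(real \<Rightarrow> real) \<Rightarrow> bool" where
  "overlap_fun B \<longleftrightarrow> mono_on {1..} B \<and> (\<forall>\<mu>\<ge>1. B \<mu> \<ge> 1)"

definition B_overlapping :: "(real \<Rightarrow> real) \<Rightarrow> (real \<times> real) set \<Rightarrow> bool" where
  "B_overlapping B Rs \<longleftrightarrow>
     (\<forall>\<mu>\<ge>1. \<forall>x. (\<Sum>R\<in>Rs. indicator (par (dil \<mu> R)) x) \<le> B \<mu>)"

definition fourier :: "(real \<Rightarrow> complex) \<Rightarrow> real \<Rightarrow> complex" where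
  "fourier f \<xi> = integral\<^sup>L lborel (\<lambda>x. f x * cis (- 2 * pi * x * \<xi>))"

definition vd :: "(real \<Rightarrow> complex) \<Rightarrow> real \<Rightarrow> complex" where
  "vd g = (\<lambda>x. vector_derivative g (at x))"

definition smooth :: "(real \<Rightarrow> complex) \<Rightarrow> bool" where
  "smooth f \<longleftrightarrow> (\<forall>k x. ((vd ^^ k) f) differentiable (at x))"

definition memLp :: "ennreal \<Rightarrow> (real \<Rightarrow> complex) \<Rightarrow> bool" where
  "memLp p f \<longleftrightarrow> f \<in> borel_measurable lborel \<and>
     (if p = \<infinity> then esssup lborel (\<lambda>x. ereal (norm (f x))) < \<infinity>
      else integrable lborel (\<lambda>x. norm (f x) powr enn2real p))"

definition Lpnorm :: "ennreal \<Rightarrow> (real \<Rightarrow> complex) \<Rightarrow> real" where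
  "Lpnorm p f = (if p = \<infinity> then real_of_ereal (esssup lborel (\<lambda>x. ereal (norm (f x))))
     else (integral\<^sup>L lborel (\<lambda>x. norm (f x) powr enn2real p)) powr (1 / enn2real p))"

definition lqnorm :: "ennreal \<Rightarrow> ('i \<Rightarrow> real) \<Rightarrow> 'i set \<Rightarrow> real" where
  "lqnorm q a I = (if q = \<infinity> then (if I = {} then 0 else Max (a ` I))
     else (\<Sum>i\<in>I. a i powr enn2real q) powr (1 / enn2real q))"

definition inv_exp :: "ennreal \<Rightarrow> real" where
  "inv_exp q = (if q = \<infinity> then 0 else 1 / enn2real q)"

text \<open>Admissible test functions: smooth, integrable (so the Fourier transform is
 defined pointwise), in L^p, with Fourier support inside A.\<close>
definition fourier_supp_in :: "ennreal \<Rightarrow> (real \<Rightarrow> complex) \<Rightarrow> real set \<Rightarrow> bool" where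
  "fourier_supp_in p f A \<longleftrightarrow> smooth f \<and> integrable lborel f \<and> memLp p f \<and>
     closure {\<xi>. fourier f \<xi> \<noteq> 0} \<subseteq> A"

text \<open>S can be l^q(L^p) decoupled into the finite family Rs at cost K, i.e.
 S is covered by Rs and Dec(S, Rs, p, q) <= K.\<close>
definition decouples :: "real set \<Rightarrow> (real \<times> real) set \<Rightarrow> ennreal \<Rightarrow> ennreal \<Rightarrow> real \<Rightarrow> bool" where
  "decouples S Rs p q K \<longleftrightarrow> finite Rs \<and> S \<subseteq> (\<Union>R\<in>Rs. par R) \<and>
     (\<forall>f. (\<forall>R\<in>Rs. fourier_supp_in p (f R) (par R \<inter> S)) \<longrightarrow>
        Lpnorm p (\<lambda>x. \<Sum>R\<in>Rs. f R x)
          \<le> K * real (card Rs) powr (1/2 - inv_exp q) * lqnorm q (\<lambda>R. Lpnorm p (f R)) Rs)"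

definition P1 :: "nat \<Rightarrow> real poly set" where
  "P1 d = {\<phi>. degree \<phi> \<le> d \<and> (\<forall>x\<in>{-1..1}. \<bar>poly \<phi> x\<bar> \<le> 1)}"

end

theory Submission
  imports Defs
begin

text \<open>Between two consecutive points of the finite set
  formed by the endpoints of \<open>R\<close> and the at most \<open>2d\<close> solutions of \<open>\<bar>\<phi> x\<bar> = \<delta>\<close>, the sign of
  \<open>\<bar>\<phi>\<bar> - \<delta>\<close> is constant by the intermediate value theorem. Hence the sublevel set is covered by
  at most \<open>(2d + 2)\<^sup>2\<close> intervals contained in it with endpoints in that set. Thickening each of
  them to width \<open>\<delta>\<close> keeps it inside \<open>2R\<close>, and since \<open>P\<^sub>1\<^sub>,\<^sub>d\<close> is uniformly Lipschitz on \<open>[-2, 2]\<close>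
  (Lagrange interpolation at \<open>d + 1\<close> nodes) we still have \<open>\<bar>\<phi>\<bar> \<le> C \<delta>\<close> there. With a number of
  pieces bounded independently of \<open>\<delta>\<close>, bounded overlap is trivial and the triangle inequality
  already decouples at a cost independent of \<open>\<delta>\<close>.\<close>

section \<open>Norms of finite sums\<close>

lemma esssup_norm_nonneg:
  fixes f :: "real \<Rightarrow> 'a::real_normed_vector"
  shows "0 \<le> esssup lborel (\<lambda>x. ereal (norm (f x)))"
proof -
  have "esssup lborel (\<lambda>x::real. ereal 0) \<le> esssup lborel (\<lambda>x. ereal (norm (f x)))"
    by (rule esssup_mono) auto
  then show ?thesis
    by (simp add: esssup_const zero_ereal_def)
qed

lemma Lpnorm_nonneg: "0 \<le> Lpnorm p f"
  by (simp add: Lpnorm_def real_of_ereal_pos esssup_norm_nonneg)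

lemma lqnorm_nonneg:
  assumes "finite I" "\<And>i. i \<in> I \<Longrightarrow> 0 \<le> a i"
  shows "0 \<le> lqnorm q a I"
proof (cases "q = \<infinity> \<and> I \<noteq> {}")
  case True
  then obtain i where "i \<in> I"
    by blast
  then show ?thesis
    using True assms by (auto simp: lqnorm_def intro: order_trans[OF _ Max_ge])
qed (auto simp: lqnorm_def)

lemma le_lqnorm_infinity:
  assumes "finite I" "i \<in> I"
  shows "a i \<le> lqnorm \<infinity> a I"
  using assms by (auto simp: lqnorm_def)

lemma AE_norm_le_Lpnorm_infinity:
  assumes "memLp \<infinity> f"
  shows "AE x in lborel. norm (f x) \<le> Lpnorm \<infinity> f"
proof -
  have "esssup lborel (\<lambda>x. ereal (norm (f x))) = ereal (Lpnorm \<infinity> f)"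
    using assms esssup_norm_nonneg[of f]
    by (cases "esssup lborel (\<lambda>x. ereal (norm (f x)))") (auto simp: memLp_def Lpnorm_def)
  then show ?thesis
    using esssup_AE[of "\<lambda>x. ereal (norm (f x))" lborel] by simp
qed

lemma Lpnorm_infinity_le:
  assumes "f \<in> borel_measurable lborel" "AE x in lborel. norm (f x) \<le> c" "0 \<le> c"
  shows "Lpnorm \<infinity> f \<le> c"
proof -
  have "esssup lborel (\<lambda>x. ereal (norm (f x))) \<le> ereal c"
    using assms(1,2) by (intro esssup_I) auto
  then show ?thesis
    using Lpnorm_nonneg[of \<infinity> f] assms(3)
    by (cases "esssup lborel (\<lambda>x. ereal (norm (f x)))") (auto simp: Lpnorm_def)
qed

lemma norm_sum_powr_le:
  fixes a :: "'i \<Rightarrow> 'b::real_normed_vector"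
  assumes "finite S" "r > 0"
  shows "norm (\<Sum>i\<in>S. a i) powr r \<le> real (card S) powr r * (\<Sum>i\<in>S. norm (a i) powr r)"
proof -
  define T where "T = (\<Sum>i\<in>S. norm (a i) powr r)"
  have "T \<ge> 0"
    unfolding T_def by (intro sum_nonneg) auto
  have term_le: "norm (a i) \<le> T powr (1/r)" if "i \<in> S" for i
  proof -
    have "norm (a i) powr r \<le> T"
      unfolding T_def using that assms(1) by (intro member_le_sum) auto
    then have "(norm (a i) powr r) powr (1/r) \<le> T powr (1/r)"
      by (intro powr_mono2) (use assms(2) in auto)
    then show ?thesis
      using assms(2) by (simp add: powr_powr)
  qed
  have "norm (\<Sum>i\<in>S. a i) \<le> (\<Sum>i\<in>S. norm (a i))"
    by (rule norm_sum)
  also have "\<dots> \<le> real (card S) * T powr (1/r)"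
    using sum_mono[of S _ "\<lambda>_. T powr (1/r)", OF term_le] by simp
  finally have "norm (\<Sum>i\<in>S. a i) powr r \<le> (real (card S) * T powr (1/r)) powr r"
    by (intro powr_mono2) (use assms(2) in auto)
  also have "\<dots> = real (card S) powr r * T"
    using assms(2) \<open>T \<ge> 0\<close> by (simp add: powr_mult powr_powr)
  finally show ?thesis
    unfolding T_def .
qed

lemma Lpnorm_infinity_sum_le:
  assumes "finite S" "\<And>i. i \<in> S \<Longrightarrow> memLp \<infinity> (f i)"
  shows "Lpnorm \<infinity> (\<lambda>x. \<Sum>i\<in>S. f i x) \<le> real (card S) * lqnorm \<infinity> (\<lambda>i. Lpnorm \<infinity> (f i)) S"
proof (rule Lpnorm_infinity_le)
  let ?M = "lqnorm \<infinity> (\<lambda>i. Lpnorm \<infinity> (f i)) S"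
  show "(\<lambda>x. \<Sum>i\<in>S. f i x) \<in> borel_measurable lborel"
    using assms by (intro borel_measurable_sum) (auto simp: memLp_def)
  show "0 \<le> real (card S) * ?M"
    using assms(1) by (simp add: lqnorm_nonneg Lpnorm_nonneg)
  have "AE x in lborel. \<forall>i\<in>S. norm (f i x) \<le> Lpnorm \<infinity> (f i)"
    using assms(1) AE_norm_le_Lpnorm_infinity[OF assms(2)] by (simp add: AE_finite_all)
  then show "AE x in lborel. norm (\<Sum>i\<in>S. f i x) \<le> real (card S) * ?M"
  proof eventually_elim
    case (elim x)
    have "norm (\<Sum>i\<in>S. f i x) \<le> (\<Sum>i\<in>S. norm (f i x))"
      by (rule norm_sum)
    also have "\<dots> \<le> (\<Sum>i\<in>S. ?M)"
      using elim le_lqnorm_infinity[OF assms(1), of _ "\<lambda>i. Lpnorm \<infinity> (f i)"]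
      by (intro sum_mono) (auto intro: order_trans)
    finally show ?case
      by simp
  qed
qed

lemma Lpnorm_finite_sum_le:
  assumes "finite S" "r > 0" "\<And>i. i \<in> S \<Longrightarrow> memLp (ennreal r) (f i)"
  shows "Lpnorm (ennreal r) (\<lambda>x. \<Sum>i\<in>S. f i x)
    \<le> real (card S) * lqnorm (ennreal r) (\<lambda>i. Lpnorm (ennreal r) (f i)) S"
proof -
  have int: "integrable lborel (\<lambda>x. norm (f i x) powr r)" if "i \<in> S" for i
    using assms(2) assms(3)[OF that] by (simp add: memLp_def)
  define I where "I i = (\<integral>x. norm (f i x) powr r \<partial>lborel)" for i
  have "I i \<ge> 0" for i
    unfolding I_def by (intro integral_nonneg_AE) auto
  have "(\<integral>x. norm (\<Sum>i\<in>S. f i x) powr r \<partial>lborel)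
      \<le> (\<integral>x. real (card S) powr r * (\<Sum>i\<in>S. norm (f i x) powr r) \<partial>lborel)"
    using int assms(1,2)
    by (intro integral_mono' integrable_mult_right integrable_sum norm_sum_powr_le)
       (auto intro!: sum_nonneg mult_nonneg_nonneg)
  also have "\<dots> = real (card S) powr r * (\<Sum>i\<in>S. I i)"
    unfolding I_def using int by (simp add: integral_sum)
  finally have "Lpnorm (ennreal r) (\<lambda>x. \<Sum>i\<in>S. f i x)
      \<le> (real (card S) powr r * (\<Sum>i\<in>S. I i)) powr (1/r)"
    using assms(2) by (auto simp: Lpnorm_def intro!: powr_mono2 integral_nonneg_AE)
  also have "\<dots> = real (card S) * (\<Sum>i\<in>S. I i) powr (1/r)"
    using assms(2) \<open>\<And>i. I i \<ge> 0\<close> by (simp add: powr_mult powr_powr sum_nonneg)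
  also have "(\<Sum>i\<in>S. I i) powr (1/r) = lqnorm (ennreal r) (\<lambda>i. Lpnorm (ennreal r) (f i)) S"
    using assms(2) \<open>\<And>i. I i \<ge> 0\<close> by (simp add: lqnorm_def Lpnorm_def I_def powr_powr)
  finally show ?thesis .
qed

lemma Lpnorm_sum_le:
  assumes "finite S" "p \<noteq> 0" "\<And>i. i \<in> S \<Longrightarrow> memLp p (f i)"
  shows "Lpnorm p (\<lambda>x. \<Sum>i\<in>S. f i x) \<le> real (card S) * lqnorm p (\<lambda>i. Lpnorm p (f i)) S"
proof (cases p)
  case (real r)
  then show ?thesis
    using assms Lpnorm_finite_sum_le[of S r f] by (cases "r > 0") auto
qed (use assms Lpnorm_infinity_sum_le in auto)

lemma inv_exp_le_half: "2 \<le> p \<Longrightarrow> inv_exp p \<le> 1/2"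
  by (cases p) (auto simp: inv_exp_def field_simps)

lemma decouples_of_card_le:
  assumes "finite S" "E \<subseteq> (\<Union>Q\<in>S. par Q)" "2 \<le> p" "real (card S) \<le> K"
  shows "decouples E S p p K"
  unfolding decouples_def
proof (intro conjI allI impI assms(1,2))
  fix f assume "\<forall>Q\<in>S. fourier_supp_in p (f Q) (par Q \<inter> E)"
  then have "\<And>Q. Q \<in> S \<Longrightarrow> memLp p (f Q)"
    by (simp add: fourier_supp_in_def)
  then have sum_le: "Lpnorm p (\<lambda>x. \<Sum>Q\<in>S. f Q x) \<le> real (card S) * lqnorm p (\<lambda>Q. Lpnorm p (f Q)) S"
    using assms(1,3) by (intro Lpnorm_sum_le) auto
  have "real (card S) \<le> K * real (card S) powr (1/2 - inv_exp p)"
  proof (cases "card S = 0")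
    case False
    then have "1 \<le> real (card S) powr (1/2 - inv_exp p)"
      using inv_exp_le_half[OF assms(3)] by (intro ge_one_powr_ge_zero) auto
    then show ?thesis
      using assms(4) mult_left_mono[of 1 _ K] by fastforce
  qed simp
  then show "Lpnorm p (\<lambda>x. \<Sum>Q\<in>S. f Q x)
      \<le> K * real (card S) powr (1/2 - inv_exp p) * lqnorm p (\<lambda>Q. Lpnorm p (f Q)) S"
    using sum_le assms(1) by (meson lqnorm_nonneg Lpnorm_nonneg mult_right_mono order_trans)
qed

lemma B_overlapping_const_card:
  assumes "finite S" "real (card S) \<le> M"
  shows "B_overlapping (\<lambda>_. M) S"
  unfolding B_overlapping_def
proof (intro allI impI)
  fix \<mu> x :: real
  have "(\<Sum>Q\<in>S. indicator (par (dil \<mu> Q)) x) \<le> (\<Sum>Q\<in>S. 1::real)"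
    by (intro sum_mono) (simp add: indicator_def)
  then show "(\<Sum>Q\<in>S. indicator (par (dil \<mu> Q)) x) \<le> M"
    using assms(2) by simp
qed

section \<open>Lagrange interpolation and uniform Lipschitz bounds\<close>

definition lagrange_basis :: "('i \<Rightarrow> 'a::field) \<Rightarrow> 'i set \<Rightarrow> 'i \<Rightarrow> 'a poly" where
  "lagrange_basis t I j = smult (inverse (\<Prod>i\<in>I - {j}. t j - t i)) (\<Prod>i\<in>I - {j}. [:- t i, 1:])"

lemma poly_lagrange_basis:
  assumes "finite I" "inj_on t I" "j \<in> I" "k \<in> I"
  shows "poly (lagrange_basis t I j) (t k) = (if k = j then 1 else 0)"
proof (cases "k = j")
  case True
  have "(\<Prod>i\<in>I - {j}. t j - t i) \<noteq> 0"
    using assms by (auto simp: inj_on_def)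
  then show ?thesis
    using True by (simp add: lagrange_basis_def poly_prod)
next
  case False
  then have "(\<Prod>i\<in>I - {j}. poly [:- t i, 1:] (t k)) = 0"
    using assms by (intro prod_zero) auto
  then show ?thesis
    using False by (simp add: lagrange_basis_def poly_prod)
qed

lemma degree_lagrange_basis:
  assumes "finite I" "j \<in> I"
  shows "degree (lagrange_basis t I j) < card I"
proof -
  have "degree (\<Prod>i\<in>I - {j}. [:- t i, 1:]) \<le> (\<Sum>i\<in>I - {j}. degree [:- t i, 1:])"
    using assms(1) degree_prod_sum_le[of "I - {j}" "\<lambda>i. [:- t i, 1:]"] by (simp add: o_def)
  also have "\<dots> < card I"
    using assms card_gt_0_iff[of I] by auto
  finally show ?thesis
    unfolding lagrange_basis_def using degree_smult_le order.strict_trans1 by blast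
qed

lemma lagrange_interpolation:
  fixes p :: "'a::field poly"
  assumes "finite I" "inj_on t I" "degree p < card I"
  shows "p = (\<Sum>j\<in>I. smult (poly p (t j)) (lagrange_basis t I j))"
proof (rule poly_eqI_degree)
  show "poly p x = poly (\<Sum>j\<in>I. smult (poly p (t j)) (lagrange_basis t I j)) x" if "x \<in> t ` I" for x
    using that assms(1,2) by (auto simp: poly_sum poly_lagrange_basis if_distrib cong: sum.cong if_cong)
  show "degree p < card (t ` I)" "degree (\<Sum>j\<in>I. smult (poly p (t j)) (lagrange_basis t I j)) < card (t ` I)"
    using assms by (auto simp: card_image intro!: degree_sum_less order.strict_trans1[OF degree_smult_le]
        degree_lagrange_basis)
qed

lemma lipschitz_on_sum:
  fixes f :: "'i \<Rightarrow> 'a::metric_space \<Rightarrow> 'b::real_normed_vector"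
  assumes "finite I" "\<And>i. i \<in> I \<Longrightarrow> (C i)-lipschitz_on U (f i)"
  shows "(\<Sum>i\<in>I. C i)-lipschitz_on U (\<lambda>x. \<Sum>i\<in>I. f i x)"
  using assms by (induction I rule: finite_induct) (auto intro: lipschitz_on_add lipschitz_on_constant)

lemma poly_lipschitz_on:
  fixes p :: "real poly"
  assumes "compact S" "convex S"
  obtains L where "L-lipschitz_on S (poly p)"
proof -
  have "bounded (poly (pderiv p) ` S)"
    using assms(1) by (intro compact_imp_bounded compact_continuous_image) (auto intro: continuous_intros)
  then obtain B where B: "\<And>x. x \<in> S \<Longrightarrow> norm (poly (pderiv p) x) \<le> B"
    by (auto simp: bounded_iff)
  have "(max B 0)-lipschitz_on S (poly p)"
  proof (rule lipschitz_onI)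
    fix x y assume "x \<in> S" "y \<in> S"
    then have "norm (poly p x - poly p y) \<le> max B 0 * norm (x - y)"
      using B by (intro field_differentiable_bound[OF assms(2), of _ "poly (pderiv p)"])
        (auto intro: has_field_derivative_at_within simp: le_max_iff_disj)
    then show "dist (poly p x) (poly p y) \<le> max B 0 * dist x y"
      by (simp add: dist_norm)
  qed simp
  then show ?thesis
    using that by blast
qed

lemma P1_uniformly_lipschitz_on:
  fixes a b :: real
  obtains L where "\<And>\<phi>. \<phi> \<in> P1 d \<Longrightarrow> L-lipschitz_on {a..b} (poly \<phi>)"
proof -
  define t where "t j = real j / real (Suc d)" for j
  define basis where "basis = lagrange_basis t {0..d}"
  have "inj_on t {0..d}"
    by (auto simp: t_def inj_on_def)
  have t_in: "t j \<in> {-1..1}" if "j \<in> {0..d}" for j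
    using that by (auto simp: t_def field_simps)
  have "\<forall>j. \<exists>L. L-lipschitz_on {a..b} (poly (basis j))"
    using poly_lipschitz_on[of "{a..b}"] by auto
  then obtain L where L: "\<And>j. (L j)-lipschitz_on {a..b} (poly (basis j))"
    by metis
  have "(\<Sum>j\<in>{0..d}. 1 * L j)-lipschitz_on {a..b} (poly \<phi>)" if "\<phi> \<in> P1 d" for \<phi>
  proof -
    have interpolation: "\<phi> = (\<Sum>j\<in>{0..d}. smult (poly \<phi> (t j)) (basis j))"
      unfolding basis_def using that by (intro lagrange_interpolation \<open>inj_on t {0..d}\<close>) (auto simp: P1_def)
    have "poly \<phi> = (\<lambda>x. \<Sum>j\<in>{0..d}. poly \<phi> (t j) * poly (basis j) x)"
    proof
      show "poly \<phi> x = (\<Sum>j\<in>{0..d}. poly \<phi> (t j) * poly (basis j) x)" for x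
        by (subst (1) interpolation) (simp add: poly_sum)
    qed
    moreover have "\<bar>poly \<phi> (t j)\<bar> \<le> 1" if "j \<in> {0..d}" for j
      using \<open>\<phi> \<in> P1 d\<close> t_in[OF that] by (auto simp: P1_def)
    then have "(\<Sum>j\<in>{0..d}. 1 * L j)-lipschitz_on {a..b} (\<lambda>x. \<Sum>j\<in>{0..d}. poly \<phi> (t j) * poly (basis j) x)"
      using L by (intro lipschitz_on_sum lipschitz_on_cmult_real_upper) auto
    ultimately show ?thesis
      by (simp only:)
  qed
  then show ?thesis
    using that by blast
qed

section \<open>Covering sublevel sets of polynomials\<close>

lemma abs_le_on_atLeastAtMost_without_level_points:
  fixes f :: "real \<Rightarrow> real"
  assumes "continuous_on {z..z'} f" "x \<in> {z<..<z'}" "\<bar>f x\<bar> \<le> \<delta>"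
    and "\<And>t. t \<in> {z<..<z'} \<Longrightarrow> \<bar>f t\<bar> \<noteq> \<delta>" and "y \<in> {z..z'}"
  shows "\<bar>f y\<bar> \<le> \<delta>"
proof (rule ccontr)
  assume "\<not> \<bar>f y\<bar> \<le> \<delta>"
  then have "\<delta> \<in> closed_segment \<bar>f x\<bar> \<bar>f y\<bar>"
    using assms(3) by (simp add: closed_segment_eq_real_ivl)
  moreover have "closed_segment x y \<subseteq> {z..z'}"
    using assms(2,5) by (auto simp: closed_segment_eq_real_ivl)
  then have "continuous_on (closed_segment x y) (\<lambda>t. \<bar>f t\<bar>)"
    using assms(1) by (intro continuous_on_rabs) (rule continuous_on_subset)
  ultimately obtain s where "s \<in> closed_segment x y" "\<bar>f s\<bar> = \<delta>"
    using IVT'_closed_segment_real[of \<delta> "\<lambda>t. \<bar>f t\<bar>" x y] by auto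
  moreover from this have "s \<noteq> y"
    using \<open>\<not> \<bar>f y\<bar> \<le> \<delta>\<close> by auto
  ultimately have "s \<in> {z<..<z'}"
    using assms(2,5) by (auto simp: closed_segment_eq_real_ivl split: if_splits)
  then show False
    using assms(4) \<open>\<bar>f s\<bar> = \<delta>\<close> by blast
qed

lemma sublevel_set_covered_by_intervals:
  fixes f :: "real \<Rightarrow> real"
  assumes "finite Z" "a \<in> Z" "b \<in> Z" "continuous_on {a..b} f"
    and "\<And>t. t \<in> {a..b} \<Longrightarrow> \<bar>f t\<bar> = \<delta> \<Longrightarrow> t \<in> Z"
    and "x \<in> {a..b}" "\<bar>f x\<bar> \<le> \<delta>"
  obtains z z' where "z \<in> Z" "z' \<in> Z" "x \<in> {z..z'}" "{z..z'} \<subseteq> {y \<in> {a..b}. \<bar>f y\<bar> \<le> \<delta>}"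
proof (cases "x \<in> Z")
  case True
  then show ?thesis
    using that[of x x] assms(6,7) by auto
next
  case False
  define below where "below = {w \<in> Z. w \<le> x}"
  define above where "above = {w \<in> Z. x \<le> w}"
  define z where "z = Max below"
  define z' where "z' = Min above"
  have "finite below" "a \<in> below" "finite above" "b \<in> above"
    using assms(1,2,3,6) by (auto simp: below_def above_def)
  then have "z \<in> below" "z' \<in> above" "a \<le> z" "z' \<le> b"
    unfolding z_def z'_def by (auto intro: Max_in Min_in Max_ge Min_le)
  then have "z \<in> Z" "z' \<in> Z" "x \<in> {z<..<z'}" "a \<le> z" "z' \<le> b"
    using False by (auto simp: below_def above_def less_le)
  moreover have "\<bar>f t\<bar> \<noteq> \<delta>" if "t \<in> {z<..<z'}" for t
  proof
    assume "\<bar>f t\<bar> = \<delta>"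
    then have "t \<in> Z"
      using that \<open>a \<le> z\<close> \<open>z' \<le> b\<close> by (intro assms(5)) auto
    then have "t \<le> z \<or> z' \<le> t"
      using \<open>finite below\<close> \<open>finite above\<close> unfolding z_def z'_def
      by (cases "t \<le> x") (auto simp: below_def above_def intro: Max_ge Min_le)
    then show False
      using that by auto
  qed
  moreover have "continuous_on {z..z'} f"
    by (rule continuous_on_subset[OF assms(4)]) (use \<open>a \<le> z\<close> \<open>z' \<le> b\<close> in auto)
  ultimately have "\<bar>f y\<bar> \<le> \<delta>" if "y \<in> {z..z'}" for y
    using abs_le_on_atLeastAtMost_without_level_points assms(7) that by blast
  then show ?thesis
    using that[of z z'] \<open>z \<in> Z\<close> \<open>z' \<in> Z\<close> \<open>x \<in> {z<..<z'}\<close> \<open>a \<le> z\<close> \<open>z' \<le> b\<close>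
    by fastforce
qed

lemma poly_sublevel_set_covered_by_intervals:
  fixes \<phi> :: "real poly"
  obtains Z where "finite Z" "card Z \<le> 2 * degree \<phi> + 2"
    "\<And>x. x \<in> {a..b} \<Longrightarrow> \<bar>poly \<phi> x\<bar> \<le> \<delta> \<Longrightarrow>
       \<exists>z\<in>Z. \<exists>z'\<in>Z. x \<in> {z..z'} \<and> {z..z'} \<subseteq> {y \<in> {a..b}. \<bar>poly \<phi> y\<bar> \<le> \<delta>}"
proof (cases "degree \<phi> = 0")
  case True
  then obtain c where "\<phi> = [:c:]"
    by (metis degree_eq_zeroE)
  show ?thesis
  proof (rule that[of "{a, b}"])
    show "card {a, b} \<le> 2 * degree \<phi> + 2"
      by (simp add: card_insert_le_m1)
    show "\<exists>z\<in>{a, b}. \<exists>z'\<in>{a, b}. x \<in> {z..z'} \<and> {z..z'} \<subseteq> {y \<in> {a..b}. \<bar>poly \<phi> y\<bar> \<le> \<delta>}"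
      if "x \<in> {a..b}" "\<bar>poly \<phi> x\<bar> \<le> \<delta>" for x
      using that \<open>\<phi> = [:c:]\<close> by (intro bexI[of _ a] bexI[of _ b]) auto
  qed simp
next
  case False
  define q where "q = (\<phi> - [:\<delta>:]) * (\<phi> + [:\<delta>:])"
  have "\<phi> - [:\<delta>:] \<noteq> 0" "\<phi> + [:\<delta>:] \<noteq> 0"
    using False by (metis degree_pCons_0 eq_iff_diff_eq_0, metis add_eq_0_iff degree_minus degree_pCons_0)
  then have "q \<noteq> 0"
    by (simp add: q_def)
  have "degree (\<phi> - [:\<delta>:]) \<le> degree \<phi>" "degree (\<phi> + [:\<delta>:]) \<le> degree \<phi>"
    by (auto intro: degree_diff_le degree_add_le)
  then have "degree q \<le> 2 * degree \<phi>"
    unfolding q_def by (intro order_trans[OF degree_mult_le]) simp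
  define Z where "Z = {a, b} \<union> {t. poly q t = 0}"
  have "finite Z"
    using poly_roots_finite[OF \<open>q \<noteq> 0\<close>] by (simp add: Z_def)
  moreover have "card Z \<le> 2 * degree \<phi> + 2"
  proof -
    have "card Z \<le> card {a, b} + card {t. poly q t = 0}"
      unfolding Z_def by (rule card_Un_le)
    also have "\<dots> \<le> 2 + degree q"
      using card_poly_roots_bound[OF \<open>q \<noteq> 0\<close>] by (intro add_mono) (auto simp: card_insert_le_m1)
    finally show ?thesis
      using \<open>degree q \<le> 2 * degree \<phi>\<close> by linarith
  qed
  moreover have "a \<in> Z" "b \<in> Z"
    by (simp_all add: Z_def)
  moreover have "t \<in> Z" if "\<bar>poly \<phi> t\<bar> = \<delta>" for t
    using that by (auto simp: Z_def q_def abs_if split: if_splits)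
  moreover have "continuous_on {a..b} (poly \<phi>)"
    by (intro continuous_intros)
  ultimately show ?thesis
    using that sublevel_set_covered_by_intervals[of Z a b "poly \<phi>" \<delta>] by (metis (lifting))
qed

definition thicken :: "real \<Rightarrow> real \<Rightarrow> real \<Rightarrow> real \<times> real" where
  "thicken \<delta> z z' = ((z + z') / 2, max ((z' - z) / 2) \<delta>)"

lemma par_eq_atLeastAtMost: "par R = {fst R - snd R .. fst R + snd R}"
  by (auto simp: par_def abs_le_iff)

lemma is_par_thicken: "0 < \<delta> \<Longrightarrow> is_par (thicken \<delta> z z')"
  by (simp add: is_par_def thicken_def)

lemma width_thicken: "\<delta> \<le> width (thicken \<delta> z z')"
  by (simp add: width_def thicken_def)

lemma atLeastAtMost_subset_par_thicken: "{z..z'} \<subseteq> par (thicken \<delta> z z')"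
  by (auto simp: par_eq_atLeastAtMost thicken_def max_def field_simps)

lemma par_thicken_near_atLeastAtMost:
  assumes "0 \<le> \<delta>" "z \<le> z'" "x \<in> par (thicken \<delta> z z')"
  shows "\<exists>y\<in>{z..z'}. \<bar>x - y\<bar> \<le> \<delta>"
proof (cases "x \<in> {z..z'}")
  case False
  then have "\<bar>x - (z + z') / 2\<bar> \<le> \<delta>"
    using assms by (auto simp: par_def thicken_def max_def field_simps split: if_splits)
  then show ?thesis
    using assms(2) by (intro bexI[of _ "(z + z') / 2"]) auto
next
  case True
  then show ?thesis
    using assms(1) by (intro bexI[of _ x]) auto
qed

lemma par_thicken_subset_par_dil2:
  assumes "z \<le> z'" "{z..z'} \<subseteq> par R" "\<delta> \<le> width R"
  shows "par (thicken \<delta> z z') \<subseteq> par (dil 2 R)"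
  using assms by (auto simp: par_eq_atLeastAtMost thicken_def dil_def width_def max_def field_simps)

lemma poly_sublevel_set_cover:
  fixes \<phi> :: "real poly"
  assumes lip: "L-lipschitz_on {-2..2} (poly \<phi>)" and "0 < \<delta>" "\<delta> < 1"
    and R: "par R \<subseteq> {-1..1}" "\<delta> \<le> width R"
  obtains S where "finite S" "card S \<le> (2 * degree \<phi> + 2)\<^sup>2"
    "{x \<in> par R. \<bar>poly \<phi> x\<bar> \<le> \<delta>} \<subseteq> (\<Union>Q\<in>S. par Q)"
    "\<And>Q. Q \<in> S \<Longrightarrow> is_par Q \<and> par Q \<subseteq> par (dil 2 R) \<and> \<delta> \<le> width Q"
    "\<And>Q x. Q \<in> S \<Longrightarrow> x \<in> par Q \<Longrightarrow> \<bar>poly \<phi> x\<bar> \<le> (1 + L) * \<delta>"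
proof -
  define E where "E = {x \<in> par R. \<bar>poly \<phi> x\<bar> \<le> \<delta>}"
  have E_eq: "E = {x \<in> {fst R - snd R..fst R + snd R}. \<bar>poly \<phi> x\<bar> \<le> \<delta>}"
    by (simp add: E_def par_eq_atLeastAtMost)
  obtain Z where Z: "finite Z" "card Z \<le> 2 * degree \<phi> + 2"
    "\<And>x. x \<in> E \<Longrightarrow> \<exists>z\<in>Z. \<exists>z'\<in>Z. x \<in> {z..z'} \<and> {z..z'} \<subseteq> E"
    unfolding E_eq by (rule poly_sublevel_set_covered_by_intervals) auto
  define P where "P = {(z, z') \<in> Z \<times> Z. z \<le> z' \<and> {z..z'} \<subseteq> E}"
  define S where "S = (\<lambda>(z, z'). thicken \<delta> z z') ` P"
  have "P \<subseteq> Z \<times> Z"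
    by (auto simp: P_def)
  then have "finite P"
    using Z(1) finite_subset by blast
  then have "finite S"
    by (simp add: S_def)
  moreover have "card S \<le> (2 * degree \<phi> + 2)\<^sup>2"
  proof -
    have "card S \<le> card P"
      unfolding S_def using \<open>finite P\<close> by (rule card_image_le)
    also have "\<dots> \<le> card (Z \<times> Z)"
      using \<open>P \<subseteq> Z \<times> Z\<close> Z(1) by (intro card_mono) auto
    also have "\<dots> = (card Z)\<^sup>2"
      by (simp add: card_cartesian_product power2_eq_square)
    also have "\<dots> \<le> (2 * degree \<phi> + 2)\<^sup>2"
      using Z(2) by (rule power_mono) simp
    finally show ?thesis .
  qed
  moreover have "E \<subseteq> (\<Union>Q\<in>S. par Q)"
  proof
    fix x assume "x \<in> E"
    then obtain z z' where "z \<in> Z" "z' \<in> Z" "x \<in> {z..z'}" "{z..z'} \<subseteq> E"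
      using Z(3) by blast
    then have "(z, z') \<in> P" "x \<in> par (thicken \<delta> z z')"
      using atLeastAtMost_subset_par_thicken[of z z' \<delta>] by (auto simp: P_def)
    then show "x \<in> (\<Union>Q\<in>S. par Q)"
      unfolding S_def by force
  qed
  moreover have "is_par Q \<and> par Q \<subseteq> par (dil 2 R) \<and> \<delta> \<le> width Q" if "Q \<in> S" for Q
  proof -
    obtain z z' where "(z, z') \<in> P" "Q = thicken \<delta> z z'"
      using \<open>Q \<in> S\<close> by (auto simp: S_def)
    then have "z \<le> z'" "{z..z'} \<subseteq> E" "Q = thicken \<delta> z z'"
      by (auto simp: P_def)
    moreover have "E \<subseteq> par R"
      by (auto simp: E_def)
    ultimately show ?thesis
      using \<open>0 < \<delta>\<close> R(2) is_par_thicken width_thicken par_thicken_subset_par_dil2 by blast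
  qed
  moreover have "\<bar>poly \<phi> x\<bar> \<le> (1 + L) * \<delta>" if "Q \<in> S" "x \<in> par Q" for Q x
  proof -
    obtain z z' where "(z, z') \<in> P" "x \<in> par (thicken \<delta> z z')"
      using \<open>Q \<in> S\<close> \<open>x \<in> par Q\<close> by (auto simp: S_def)
    then have "z \<le> z'" "{z..z'} \<subseteq> E" "x \<in> par (thicken \<delta> z z')"
      by (auto simp: P_def)
    then obtain y where "y \<in> {z..z'}" "\<bar>x - y\<bar> \<le> \<delta>"
      using \<open>0 < \<delta>\<close> par_thicken_near_atLeastAtMost[of \<delta> z z' x] by auto
    then have "y \<in> E"
      using \<open>{z..z'} \<subseteq> E\<close> by blast
    then have "y \<in> {-1..1}" "\<bar>poly \<phi> y\<bar> \<le> \<delta>"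
      using R(1) by (auto simp: E_def)
    then have "x \<in> {-2..2}"
      using \<open>\<bar>x - y\<bar> \<le> \<delta>\<close> \<open>\<delta> < 1\<close> by auto
    have "\<bar>poly \<phi> x - poly \<phi> y\<bar> \<le> L * \<bar>x - y\<bar>"
      using lipschitz_onD[OF lip \<open>x \<in> {-2..2}\<close>] \<open>y \<in> {-1..1}\<close> by (simp add: dist_real_def)
    also have "\<dots> \<le> L * \<delta>"
      using \<open>\<bar>x - y\<bar> \<le> \<delta>\<close> lipschitz_on_nonneg[OF lip] by (rule mult_left_mono)
    finally show ?thesis
      using \<open>\<bar>poly \<phi> y\<bar> \<le> \<delta>\<close> by (simp add: algebra_simps)
  qed
  ultimately show ?thesis
    using that unfolding E_def by blast
qed

lemma P1_sublevel_set_decomposition: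
  fixes \<phi> :: "real poly"
  assumes "L-lipschitz_on {-2..2} (poly \<phi>)" "degree \<phi> \<le> d" "0 < \<delta>" "\<delta> < 1" "0 < \<epsilon>"
    and "par R \<subseteq> {-1..1}" "\<delta> \<le> width R"
  defines "M \<equiv> real ((2 * d + 2)\<^sup>2)"
  shows "\<exists>S. finite S \<and> {x \<in> par R. \<bar>poly \<phi> x\<bar> \<le> \<delta>} \<subseteq> (\<Union>Q\<in>S. par Q) \<and>
     (\<forall>Q\<in>S. is_par Q \<and> par Q \<subseteq> par (dil 2 R) \<and> width Q \<ge> \<delta>) \<and>
     B_overlapping (\<lambda>_. M) S \<and>
     (\<forall>Q\<in>S. \<forall>x\<in>par Q. \<bar>poly \<phi> x\<bar> \<le> (1 + L) * \<delta>) \<and>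
     (\<forall>p::ennreal. p \<ge> 2 \<longrightarrow> decouples {x \<in> par R. \<bar>poly \<phi> x\<bar> \<le> \<delta>} S p p (M * \<delta> powr (- \<epsilon>)))"
proof -
  obtain S where S: "finite S" "card S \<le> (2 * degree \<phi> + 2)\<^sup>2"
    "{x \<in> par R. \<bar>poly \<phi> x\<bar> \<le> \<delta>} \<subseteq> (\<Union>Q\<in>S. par Q)"
    "\<And>Q. Q \<in> S \<Longrightarrow> is_par Q \<and> par Q \<subseteq> par (dil 2 R) \<and> \<delta> \<le> width Q"
    "\<And>Q x. Q \<in> S \<Longrightarrow> x \<in> par Q \<Longrightarrow> \<bar>poly \<phi> x\<bar> \<le> (1 + L) * \<delta>"
    using poly_sublevel_set_cover[OF assms(1,3,4,6,7)] by blast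
  have "card S \<le> (2 * d + 2)\<^sup>2"
    using S(2) assms(2) by (meson add_le_mono1 mult_le_mono2 power_mono le0 order_trans)
  then have "real (card S) \<le> M"
    unfolding M_def by linarith
  moreover have "1 \<le> \<delta> powr (- \<epsilon>)"
    using assms(3-5) by (simp add: powr_minus one_le_inverse powr_le1)
  then have "M \<le> M * \<delta> powr (- \<epsilon>)"
    by (simp add: M_def)
  ultimately show ?thesis
    using S by (intro exI[of _ S]) (auto intro!: B_overlapping_const_card decouples_of_card_le)
qed

theorem proposition2p5:
  "\<forall>d::nat. d \<ge> 1 \<longrightarrow> (\<exists>c>0. \<forall>\<epsilon>::real. 0 < \<epsilon> \<and> \<epsilon> \<le> 1 \<longrightarrow>
     (\<exists>(C::real) (B::real \<Rightarrow> real) (Cp::ennreal \<Rightarrow> real). C > 0 \<and> overlap_fun B \<and>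
       (\<forall>\<phi>\<in>P1 d. \<forall>\<delta>::real. 0 < \<delta> \<and> \<delta> < c \<longrightarrow>
         (\<forall>R. is_par R \<and> par R \<subseteq> {-1..1} \<and> width R \<ge> \<delta> \<longrightarrow>
           (\<exists>S::(real \<times> real) set. finite S \<and>
              {x \<in> par R. \<bar>poly \<phi> x\<bar> \<le> \<delta>} \<subseteq> (\<Union>Q\<in>S. par Q) \<and>
              (\<forall>Q\<in>S. is_par Q \<and> par Q \<subseteq> par (dil 2 R) \<and> width Q \<ge> \<delta>) \<and>
              B_overlapping B S \<and>
              (\<forall>Q\<in>S. \<forall>x\<in>par Q. \<bar>poly \<phi> x\<bar> \<le> C * \<delta>) \<and>
              (\<forall>p::ennreal. p \<ge> 2 \<longrightarrow>
                 decouples {x \<in> par R. \<bar>poly \<phi> x\<bar> \<le> \<delta>} S p p (Cp p * \<delta> powr (- \<epsilon>))))))))"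
  apply (intro allI impI)
  subgoal for d
  proof -
    obtain L where L: "\<And>\<phi>. \<phi> \<in> P1 d \<Longrightarrow> L-lipschitz_on {-2..2} (poly \<phi>)"
      using P1_uniformly_lipschitz_on[where a = "-2" and b = 2] by blast
    have pos: "0 < 1 + L"
      using lipschitz_on_nonneg[OF L[of 0]] by (simp add: P1_def)
    have overlap: "overlap_fun (\<lambda>_. real ((2 * d + 2)\<^sup>2))"
      by (simp add: overlap_fun_def mono_on_def)
    have deg: "degree \<phi> \<le> d" if "\<phi> \<in> P1 d" for \<phi>
      using that by (simp add: P1_def)
    show ?thesis
    proof (rule exI[of _ "1::real"], rule conjI, simp, intro allI impI, rule exI[of _ "1 + L"],
        rule exI[of _ "\<lambda>_. real ((2 * d + 2)\<^sup>2)"], rule exI[of _ "\<lambda>_. real ((2 * d + 2)\<^sup>2)"],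
        intro conjI ballI allI impI pos overlap)
    qed (rule P1_sublevel_set_decomposition; auto intro: L deg)
  qed
  done

end
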